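(* Assume $d'=1$, $t>1$, fix $j\in[t]$ and $n\in[t]\setminus\{j\}$, and let $2\le r\le\min(a,d)$. Fix ordered tuples $K=(k_1,\dots,k_r)$ and $L=(l_1,\dots,l_r)$ of distinct elements of $[d]$. For every $\alpha\in\mathbb N^r$ with $\sum_m\alpha_m=r$ there exists a map $f:[r]\to[r]$ with $|f^{-1}(m)|=\alpha_m$ for all $m$ such that every directed cycle of $f$ is a fixed point. For any such $f$, define the $r\times r$ matrix $M_\alpha(y)$ by \[ (M_\alpha)_{p,q}=\omega(k_{f(p)},k_p)\,y_{n,j}(\{k_{f(p)},k_p\},l_q),\qquad p,q\in[r], \] and $D_{\alpha,L}(y)=\det M_\alpha(y)$. Then for all $W$, \[ D_{\alpha,L}(\mu(W))=\Big(\prod_{m=1}^r v_{k_m}^{\alpha_m}\Big)\det(A_{K,L}), \] where $A_{K,L}$ is the submatrix of $A$ with rows $K$ and columns $L$. Consequently, for each $1\le k<r$, all $2\times2$ minors of the catalecticant matrix with rows indexed by multi-indices $\beta\in\mathbb N^r$ of degree $k$, columns indexed by multi-indices $\gamma\in\mathbb N^r$ of degree $r-k$, and entries $D_{\beta+\gamma,L}(y)$, are homogeneous polynomials of degree $2r$ vanishing on the attention variety.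
   Context: Setup: $Q,K\in\mathbb R^{a\times d}$, $V\in\mathbb R^{1\times d}$ with row $v=(v_1,\dots,v_d)$, $A=K^\top Q$, $\varphi_W(X)=VX(X^\top AX)$ for $X=(x_{kn})\in\mathbb R^{d\times t}$. For a size-2 multiset $\mathcal A$ on $[d]$, $b\in[d]$, $n\ne j$: $c_{n,j}(\mathcal A,b)$ is the coefficient of $(\prod_{u\in\mathcal A}x_{un})x_{bj}$ in $\varphi_W(X)[1,j]$ and $y_{n,j}(\mathcal A,b)=c_{n,j}(\mathcal A,b)/|\operatorname{Perm}(\mathcal A)|$, where $\operatorname{Perm}$ is the set of distinct orderings. $\omega(u,w)=1$ if $u=w$ and $2$ if $u\ne w$. $\mu$ maps $W=(Q,K,V)$ to all scaled coefficients (ambient coordinates with the same names); the attention variety is the Zariski closure of $\operatorname{im}\mu$. *)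

theory Defs
  imports "HOL-Library.Poly_Mapping" "HOL-Library.Multiset"
    "HOL-Combinatorics.Multiset_Permutations"
    "Jordan_Normal_Form.Determinant"
begin

(* Indices are 0-based: [d] = {0..<d}, [t] = {0..<t}, [r] = {0..<r}.
   Real matrices are functions nat => nat => real, with only the entries
   in the stated ranges being relevant. *)

type_synonym xmono = "(nat \<times> nat) \<Rightarrow>\<^sub>0 nat"
type_synonym xpoly = "xmono \<Rightarrow>\<^sub>0 real"

definition xvar :: "nat \<Rightarrow> nat \<Rightarrow> xpoly" where
  "xvar k n = Poly_Mapping.single (Poly_Mapping.single (k, n) 1) 1"

definition xconst :: "real \<Rightarrow> xpoly" where
  "xconst c = Poly_Mapping.single 0 c"

definition attnA :: "nat \<Rightarrow> (nat \<Rightarrow> nat \<Rightarrow> real) \<Rightarrow> (nat \<Rightarrow> nat \<Rightarrow> real) \<Rightarrow> nat \<Rightarrow> nat \<Rightarrow> real" where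
  "attnA a Qm Km u w = (\<Sum>i<a. Km i u * Qm i w)"

text \<open>phi_W(X)[1,j] = sum_n (V X)_{1n} (X^T A X)_{nj}, as a polynomial in the x_{kn},
  for X of size d x t and V a 1 x d row vector v.\<close>
definition phi :: "nat \<Rightarrow> nat \<Rightarrow> nat \<Rightarrow> (nat \<Rightarrow> nat \<Rightarrow> real) \<Rightarrow> (nat \<Rightarrow> nat \<Rightarrow> real)
    \<Rightarrow> (nat \<Rightarrow> real) \<Rightarrow> nat \<Rightarrow> xpoly" where
  "phi a d t Qm Km v j =
     (\<Sum>n<t. (\<Sum>k<d. xconst (v k) * xvar k n) *
        (\<Sum>u<d. \<Sum>w<d. xvar u n * xconst (attnA a Qm Km u w) * xvar w j))"

definition coeff_mono :: "nat \<Rightarrow> nat \<Rightarrow> nat multiset \<Rightarrow> nat \<Rightarrow> xmono" where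
  "coeff_mono n j As b =
     sum_mset (image_mset (\<lambda>u. Poly_Mapping.single (u, n) 1) As) + Poly_Mapping.single (b, j) 1"

definition cnj :: "nat \<Rightarrow> nat \<Rightarrow> nat \<Rightarrow> (nat \<Rightarrow> nat \<Rightarrow> real) \<Rightarrow> (nat \<Rightarrow> nat \<Rightarrow> real)
    \<Rightarrow> (nat \<Rightarrow> real) \<Rightarrow> nat \<Rightarrow> nat \<Rightarrow> nat multiset \<Rightarrow> nat \<Rightarrow> real" where
  "cnj a d t Qm Km v n j As b = Poly_Mapping.lookup (phi a d t Qm Km v j) (coeff_mono n j As b)"

definition ynj :: "nat \<Rightarrow> nat \<Rightarrow> nat \<Rightarrow> (nat \<Rightarrow> nat \<Rightarrow> real) \<Rightarrow> (nat \<Rightarrow> nat \<Rightarrow> real)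
    \<Rightarrow> (nat \<Rightarrow> real) \<Rightarrow> nat \<Rightarrow> nat \<Rightarrow> nat multiset \<Rightarrow> nat \<Rightarrow> real" where
  "ynj a d t Qm Km v n j As b =
     cnj a d t Qm Km v n j As b / real (card (permutations_of_multiset As))"

text \<open>Ambient coordinate named (n, j, A, b) stands for y_{n,j}(A,b).\<close>
type_synonym coord = "nat \<times> nat \<times> nat multiset \<times> nat"

definition mu :: "nat \<Rightarrow> nat \<Rightarrow> nat \<Rightarrow> (nat \<Rightarrow> nat \<Rightarrow> real) \<Rightarrow> (nat \<Rightarrow> nat \<Rightarrow> real)
    \<Rightarrow> (nat \<Rightarrow> real) \<Rightarrow> coord \<Rightarrow> real" where
  "mu a d t Qm Km v = (\<lambda>(n, j, As, b). ynj a d t Qm Km v n j As b)"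

type_synonym ypoly = "(coord \<Rightarrow>\<^sub>0 nat) \<Rightarrow>\<^sub>0 real"

definition peval :: "ypoly \<Rightarrow> (coord \<Rightarrow> real) \<Rightarrow> real" where
  "peval P y = (\<Sum>m\<in>Poly_Mapping.keys P. Poly_Mapping.lookup P m * (\<Prod>c\<in>Poly_Mapping.keys m. y c ^ Poly_Mapping.lookup m c))"

definition mdeg :: "(coord \<Rightarrow>\<^sub>0 nat) \<Rightarrow> nat" where
  "mdeg m = (\<Sum>c\<in>Poly_Mapping.keys m. Poly_Mapping.lookup m c)"

definition homogeneous_of_degree :: "ypoly \<Rightarrow> nat \<Rightarrow> bool" where
  "homogeneous_of_degree P k \<longleftrightarrow> (\<forall>m\<in>Poly_Mapping.keys P. mdeg m = k)"

definition attention_variety :: "nat \<Rightarrow> nat \<Rightarrow> nat \<Rightarrow> (coord \<Rightarrow> real) set" where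
  "attention_variety a d t =
     {y. \<forall>P. (\<forall>Qm Km v. peval P (mu a d t Qm Km v) = 0) \<longrightarrow> peval P y = 0}"

definition omega :: "nat \<Rightarrow> nat \<Rightarrow> real" where
  "omega u w = (if u = w then 1 else 2)"

definition multi_idx :: "nat \<Rightarrow> nat \<Rightarrow> (nat \<Rightarrow> nat) set" where
  "multi_idx r k = {\<alpha>. (\<forall>m\<ge>r. \<alpha> m = 0) \<and> (\<Sum>m<r. \<alpha> m) = k}"

definition good_map :: "nat \<Rightarrow> (nat \<Rightarrow> nat) \<Rightarrow> (nat \<Rightarrow> nat) \<Rightarrow> bool" where
  "good_map r \<alpha> f \<longleftrightarrow>
     (\<forall>p<r. f p < r) \<and>
     (\<forall>m<r. card {p. p < r \<and> f p = m} = \<alpha> m) \<and>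
     (\<forall>p<r. \<forall>i\<ge>1. (f ^^ i) p = p \<longrightarrow> f p = p)"

definition M_mat :: "nat \<Rightarrow> nat \<Rightarrow> nat \<Rightarrow> (nat \<Rightarrow> nat) \<Rightarrow> (nat \<Rightarrow> nat) \<Rightarrow> (nat \<Rightarrow> nat)
    \<Rightarrow> (coord \<Rightarrow> real) \<Rightarrow> real mat" where
  "M_mat r n j ks ls f y =
     mat r r (\<lambda>(p, q). omega (ks (f p)) (ks p) * y (n, j, {#ks (f p), ks p#}, ls q))"

definition D_fun :: "nat \<Rightarrow> nat \<Rightarrow> nat \<Rightarrow> (nat \<Rightarrow> nat) \<Rightarrow> (nat \<Rightarrow> nat) \<Rightarrow> (nat \<Rightarrow> nat)
    \<Rightarrow> (coord \<Rightarrow> real) \<Rightarrow> real" where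
  "D_fun r n j ks ls f y = det (M_mat r n j ks ls f y)"

definition A_sub :: "nat \<Rightarrow> (nat \<Rightarrow> nat \<Rightarrow> real) \<Rightarrow> (nat \<Rightarrow> nat \<Rightarrow> real) \<Rightarrow> nat
    \<Rightarrow> (nat \<Rightarrow> nat) \<Rightarrow> (nat \<Rightarrow> nat) \<Rightarrow> real mat" where
  "A_sub a Qm Km r ks ls = mat r r (\<lambda>(p, q). attnA a Qm Km (ks p) (ls q))"

end

theory Submission
  imports Defs "HOL-Combinatorics.Orbits"
begin

(* At y = mu(W), omega(p,q) y_{n,j}({p,q},b) = v_p A_{qb} + v_q A_{pb}, the second term being
   present only for p \<noteq> q: the monomial x_{pn} x_{qn} x_{bj} arises in phi exactly from the
   summands v_k x_{kn} x_{un} A_{ub} x_{bj} with {k,u} = {p,q}.  Hence M_alpha(mu(W)) = B A_{K,L},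
   where row p of B carries v_{k_{f(p)}} on the diagonal and v_{k_p} in column f(p).  As every
   cycle of f is a fixed point, the identity is the only permutation contributing to det B, so
   det B = prod_p v_{k_{f(p)}} = prod_m v_{k_m}^{alpha_m}.  Each D_{alpha,L} is a homogeneous
   polynomial of degree r in the ambient coordinates, and in a 2x2 minor of the catalecticant
   matrix both products carry the monomial in v with exponent beta_1 + beta_2 + gamma_1 + gamma_2,
   so the minor vanishes on the image of mu and therefore on its Zariski closure. *)

definition mono_eval :: "(coord \<Rightarrow>\<^sub>0 nat) \<Rightarrow> (coord \<Rightarrow> real) \<Rightarrow> real" where
  "mono_eval m y = (\<Prod>c\<in>Poly_Mapping.keys m. y c ^ Poly_Mapping.lookup m c)"

lemma mono_eval_eq_prod_superset:
  assumes "finite S" "Poly_Mapping.keys m \<subseteq> S"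
  shows "mono_eval m y = (\<Prod>c\<in>S. y c ^ Poly_Mapping.lookup m c)"
  unfolding mono_eval_def
  by (rule prod.mono_neutral_left) (use assms in \<open>auto simp: in_keys_iff\<close>)

lemma mono_eval_add: "mono_eval (m1 + m2) y = mono_eval m1 y * mono_eval m2 y"
proof -
  let ?S = "Poly_Mapping.keys m1 \<union> Poly_Mapping.keys m2"
  have "mono_eval (m1 + m2) y = (\<Prod>c\<in>?S. y c ^ Poly_Mapping.lookup (m1 + m2) c)"
    by (rule mono_eval_eq_prod_superset[OF _ keys_add]) simp
  also have "\<dots> = (\<Prod>c\<in>?S. y c ^ Poly_Mapping.lookup m1 c) * (\<Prod>c\<in>?S. y c ^ Poly_Mapping.lookup m2 c)"
    by (simp add: lookup_add power_add prod.distrib)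
  also have "\<dots> = mono_eval m1 y * mono_eval m2 y"
    by (simp add: mono_eval_eq_prod_superset[of ?S])
  finally show ?thesis .
qed

lemma mdeg_add: "mdeg (m1 + m2) = mdeg m1 + mdeg m2"
proof -
  let ?S = "Poly_Mapping.keys m1 \<union> Poly_Mapping.keys m2"
  have sup: "mdeg m = (\<Sum>c\<in>?S. Poly_Mapping.lookup m c)" if "Poly_Mapping.keys m \<subseteq> ?S" for m
    unfolding mdeg_def by (rule sum.mono_neutral_left) (use that in \<open>auto simp: in_keys_iff\<close>)
  show ?thesis
    using keys_add[of m1 m2] by (simp add: sup lookup_add sum.distrib)
qed

lemma peval_eq_sum_mono_eval:
  "peval P y = (\<Sum>m\<in>Poly_Mapping.keys P. Poly_Mapping.lookup P m * mono_eval m y)"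
  by (simp add: peval_def mono_eval_def)

lemma peval_eq_sum_superset:
  assumes "finite S" "Poly_Mapping.keys P \<subseteq> S"
  shows "peval P y = (\<Sum>m\<in>S. Poly_Mapping.lookup P m * mono_eval m y)"
  unfolding peval_eq_sum_mono_eval
  by (rule sum.mono_neutral_left) (use assms in \<open>auto simp: in_keys_iff\<close>)

lemma peval_add: "peval (P + Q) y = peval P y + peval Q y"
  using keys_add[of P Q]
  by (simp add: peval_eq_sum_superset[of "Poly_Mapping.keys P \<union> Poly_Mapping.keys Q"] lookup_add
      distrib_right sum.distrib)

lemma peval_diff: "peval (P - Q) y = peval P y - peval Q y"
  using keys_diff[of P Q]
  by (simp add: peval_eq_sum_superset[of "Poly_Mapping.keys P \<union> Poly_Mapping.keys Q"] lookup_minus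
      left_diff_distrib sum_subtractf)

lemma peval_single: "peval (Poly_Mapping.single m c) y = c * mono_eval m y"
  by (simp add: peval_eq_sum_mono_eval)

lemma peval_zero: "peval 0 y = 0"
  by (simp add: peval_def)

lemma peval_sum: "peval (\<Sum>i\<in>I. P i) y = (\<Sum>i\<in>I. peval (P i) y)"
  by (induction I rule: infinite_finite_induct) (simp_all add: peval_zero peval_add)

lemma sum_single_lookup: "(\<Sum>m\<in>Poly_Mapping.keys P. Poly_Mapping.single m (Poly_Mapping.lookup P m)) = P"
  by (rule poly_mapping_eqI) (simp add: lookup_sum lookup_single when_def in_keys_iff)

lemma peval_mult: "peval (P * Q) y = peval P y * peval Q y"
proof -
  let ?sum = "\<lambda>P. \<Sum>m\<in>Poly_Mapping.keys P. Poly_Mapping.single m (Poly_Mapping.lookup P m)"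
  have "P * Q = ?sum P * ?sum Q"
    by (simp only: sum_single_lookup)
  also have "\<dots> = (\<Sum>m\<in>Poly_Mapping.keys P. \<Sum>m'\<in>Poly_Mapping.keys Q.
      Poly_Mapping.single (m + m') (Poly_Mapping.lookup P m * Poly_Mapping.lookup Q m'))"
    by (simp add: sum_product mult_single)
  finally have "peval (P * Q) y = (\<Sum>m\<in>Poly_Mapping.keys P. \<Sum>m'\<in>Poly_Mapping.keys Q.
      Poly_Mapping.lookup P m * mono_eval m y * (Poly_Mapping.lookup Q m' * mono_eval m' y))"
    by (simp add: peval_sum peval_single mono_eval_add mult_ac)
  also have "\<dots> = peval P y * peval Q y"
    by (simp add: peval_eq_sum_mono_eval sum_product)
  finally show ?thesis .
qed

definition homogeneous_polyfun :: "nat \<Rightarrow> ((coord \<Rightarrow> real) \<Rightarrow> real) \<Rightarrow> bool" where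
  "homogeneous_polyfun k g \<longleftrightarrow> (\<exists>P. homogeneous_of_degree P k \<and> (\<forall>y. peval P y = g y))"

lemma homogeneous_polyfun_const: "homogeneous_polyfun 0 (\<lambda>y. c)"
  unfolding homogeneous_polyfun_def
  by (intro exI[of _ "Poly_Mapping.single 0 c"])
    (simp add: homogeneous_of_degree_def mdeg_def peval_single mono_eval_def)

lemma homogeneous_polyfun_coord: "homogeneous_polyfun 1 (\<lambda>y. y c)"
  unfolding homogeneous_polyfun_def
  by (intro exI[of _ "Poly_Mapping.single (Poly_Mapping.single c 1) 1"])
    (simp add: homogeneous_of_degree_def mdeg_def peval_single mono_eval_def)

lemma homogeneous_polyfun_zero: "homogeneous_polyfun k (\<lambda>y. 0)"
  unfolding homogeneous_polyfun_def homogeneous_of_degree_def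
  by (intro exI[of _ 0]) (simp add: peval_zero)

lemma homogeneous_polyfun_add:
  assumes "homogeneous_polyfun k g" "homogeneous_polyfun k h"
  shows "homogeneous_polyfun k (\<lambda>y. g y + h y)"
proof -
  obtain P Q where "homogeneous_of_degree P k" "homogeneous_of_degree Q k"
    and "\<forall>y. peval P y = g y" "\<forall>y. peval Q y = h y"
    using assms unfolding homogeneous_polyfun_def by blast
  then show ?thesis
    unfolding homogeneous_polyfun_def homogeneous_of_degree_def
    by (intro exI[of _ "P + Q"]) (use keys_add[of P Q] in \<open>auto simp: peval_add\<close>)
qed

lemma homogeneous_polyfun_diff:
  assumes "homogeneous_polyfun k g" "homogeneous_polyfun k h"
  shows "homogeneous_polyfun k (\<lambda>y. g y - h y)"
proof -
  obtain P Q where "homogeneous_of_degree P k" "homogeneous_of_degree Q k"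
    and "\<forall>y. peval P y = g y" "\<forall>y. peval Q y = h y"
    using assms unfolding homogeneous_polyfun_def by blast
  then show ?thesis
    unfolding homogeneous_polyfun_def homogeneous_of_degree_def
    by (intro exI[of _ "P - Q"]) (use keys_diff[of P Q] in \<open>auto simp: peval_diff\<close>)
qed

lemma homogeneous_polyfun_mult:
  assumes "homogeneous_polyfun k g" "homogeneous_polyfun l h"
  shows "homogeneous_polyfun (k + l) (\<lambda>y. g y * h y)"
proof -
  obtain P Q where "homogeneous_of_degree P k" "homogeneous_of_degree Q l"
    and "\<forall>y. peval P y = g y" "\<forall>y. peval Q y = h y"
    using assms unfolding homogeneous_polyfun_def by blast
  then show ?thesis
    unfolding homogeneous_polyfun_def homogeneous_of_degree_def
    by (intro exI[of _ "P * Q"]) (use keys_mult[of P Q] in \<open>auto simp: peval_mult mdeg_add\<close>)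
qed

lemma homogeneous_polyfun_sum:
  assumes "\<And>i. i \<in> I \<Longrightarrow> homogeneous_polyfun k (g i)"
  shows "homogeneous_polyfun k (\<lambda>y. \<Sum>i\<in>I. g i y)"
  using assms
proof (induction I rule: infinite_finite_induct)
  case (insert i I)
  then show ?case by (simp add: homogeneous_polyfun_add)
qed (simp_all add: homogeneous_polyfun_zero)

lemma homogeneous_polyfun_prod:
  assumes "\<And>i. i \<in> I \<Longrightarrow> homogeneous_polyfun (k i) (g i)"
  shows "homogeneous_polyfun (\<Sum>i\<in>I. k i) (\<lambda>y. \<Prod>i\<in>I. g i y)"
  using assms
proof (induction I rule: infinite_finite_induct)
  case (insert i I)
  then show ?case by (simp add: homogeneous_polyfun_mult)
qed (simp_all add: homogeneous_polyfun_const)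

lemma homogeneous_polyfun_det:
  assumes "\<And>y. A y \<in> carrier_mat r r"
    and "\<And>p q. p < r \<Longrightarrow> q < r \<Longrightarrow> homogeneous_polyfun 1 (\<lambda>y. A y $$ (p, q))"
  shows "homogeneous_polyfun r (\<lambda>y. det (A y))"
proof -
  have "homogeneous_polyfun (0 + (\<Sum>p\<in>{0..<r}. 1))
      (\<lambda>y. signof \<sigma> * (\<Prod>p\<in>{0..<r}. A y $$ (p, \<sigma> p)))" if "\<sigma> permutes {0..<r}" for \<sigma>
    using permutes_in_image[OF that] assms(2)
    by (intro homogeneous_polyfun_mult homogeneous_polyfun_const homogeneous_polyfun_prod) auto
  then have "homogeneous_polyfun r
      (\<lambda>y. \<Sum>\<sigma>\<in>{\<sigma>. \<sigma> permutes {0..<r}}. signof \<sigma> * (\<Prod>p\<in>{0..<r}. A y $$ (p, \<sigma> p)))"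
    by (intro homogeneous_polyfun_sum) simp
  then show ?thesis
    by (simp add: det_def'[OF assms(1)])
qed

lemma permutes_eq_id_if_moves_along_acyclic:
  assumes perm: "\<sigma> permutes S" "finite S"
    and moves: "\<And>x. \<sigma> x \<noteq> x \<Longrightarrow> \<sigma> x = f x"
    and acyclic: "\<And>p i. p \<in> S \<Longrightarrow> 1 \<le> i \<Longrightarrow> (f ^^ i) p = p \<Longrightarrow> f p = p"
  shows "\<sigma> = id"
proof (rule ccontr)
  assume "\<sigma> \<noteq> id"
  then obtain p where p: "\<sigma> p \<noteq> p" by (auto simp: fun_eq_iff)
  then have "p \<in> S" using permutes_not_in[OF perm(1)] by blast
  have "p \<in> orbit \<sigma> p"
    using perm by (intro permutation_self_in_orbit) (auto simp: permutation_permutes)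
  then obtain i where i: "0 < i" "(\<sigma> ^^ i) p = p" by (auto simp: orbit_altdef)
  have inj_pow: "inj (\<sigma> ^^ m)" for m
    using permutes_inj[OF perm(1)] by simp
  have "(\<sigma> ^^ m) p = (f ^^ m) p" for m
  proof (induction m)
    case (Suc m)
    \<comment> \<open>every point of the orbit of \<open>p\<close> is moved, since \<open>\<sigma>\<^sup>m\<close> is injective\<close>
    have "(\<sigma> ^^ m) (\<sigma> p) \<noteq> (\<sigma> ^^ m) p"
      using p inj_pow[of m] by (auto dest: injD)
    then have "\<sigma> ((\<sigma> ^^ m) p) \<noteq> (\<sigma> ^^ m) p" by (simp add: funpow_swap1)
    then show ?case using Suc moves by simp
  qed simp
  then have "f p = p" using acyclic[OF \<open>p \<in> S\<close>, of i] i by simp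
  then show False using p moves by metis
qed

lemma det_eq_prod_diag_if_supported_on_acyclic:
  fixes A :: "'a :: comm_ring_1 mat"
  assumes A: "A \<in> carrier_mat r r"
    and support: "\<And>p q. p < r \<Longrightarrow> q < r \<Longrightarrow> A $$ (p, q) \<noteq> 0 \<Longrightarrow> q = p \<or> q = f p"
    and acyclic: "\<And>p i. p < r \<Longrightarrow> 1 \<le> i \<Longrightarrow> (f ^^ i) p = p \<Longrightarrow> f p = p"
  shows "det A = (\<Prod>p<r. A $$ (p, p))"
proof -
  let ?term = "\<lambda>\<sigma>. signof \<sigma> * (\<Prod>p = 0..<r. A $$ (p, \<sigma> p))"
  have "?term \<sigma> = 0" if \<sigma>: "\<sigma> permutes {0..<r}" "\<sigma> \<noteq> id" for \<sigma>
  proof (rule ccontr)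
    assume "?term \<sigma> \<noteq> 0"
    then have nz: "A $$ (p, \<sigma> p) \<noteq> 0" if "p < r" for p
      using that prod_zero[of "{0..<r}" "\<lambda>p. A $$ (p, \<sigma> p)"] by fastforce
    have moves: "\<sigma> x = f x" if "\<sigma> x \<noteq> x" for x
    proof -
      have "x < r" "\<sigma> x < r"
        using that permutes_not_in[OF \<sigma>(1)] permutes_in_image[OF \<sigma>(1)] by fastforce+
      then show ?thesis using support nz that by blast
    qed
    have "\<sigma> = id"
      by (rule permutes_eq_id_if_moves_along_acyclic[OF \<sigma>(1) _ moves]) (auto intro: acyclic)
    with \<sigma>(2) show False ..
  qed
  then have "det A = (\<Sum>\<sigma>\<in>{id}. ?term \<sigma>)"
    unfolding det_def'[OF A]
    by (intro sum.mono_neutral_right) (auto intro: finite_permutations permutes_id)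
  then show ?thesis by (simp add: atLeast0LessThan)
qed

lemma exists_map_with_fibre_cards:
  assumes "finite Z" "finite S" "(\<Sum>m\<in>S. \<beta> m) = card Z"
  shows "\<exists>g. g ` Z \<subseteq> S \<and> (\<forall>m\<in>S. card {z\<in>Z. g z = m} = \<beta> m)"
proof -
  let ?slots = "SIGMA m:S. {..<\<beta> m}"
  obtain h where h: "bij_betw h Z ?slots"
    using finite_same_card_bij[of Z ?slots] assms by auto
  have inj: "inj_on h Z"
    using h by (rule bij_betw_imp_inj_on)
  have "card {z\<in>Z. fst (h z) = m} = \<beta> m" if "m \<in> S" for m
  proof -
    have "card {z\<in>Z. fst (h z) = m} = card (h ` {z\<in>Z. fst (h z) = m})"
      by (rule card_image[symmetric], rule inj_on_subset[OF inj]) blast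
    also have "h ` {z\<in>Z. fst (h z) = m} = {x\<in>h ` Z. fst x = m}"
      by auto
    also have "\<dots> = {m} \<times> {..<\<beta> m}"
      using h that by (auto simp: bij_betw_def)
    finally show ?thesis
      by (simp add: card_cartesian_product_singleton)
  qed
  moreover have "(fst \<circ> h) ` Z \<subseteq> S"
    using bij_betwE[OF h] by auto
  ultimately show ?thesis by (intro exI[of _ "fst \<circ> h"]) simp
qed

lemma funpow_Suc_eq_if_idempotent: "f (f p) = f p \<Longrightarrow> (f ^^ Suc i) p = f p"
  by (induction i) auto

lemma good_map_exists:
  assumes "\<alpha> \<in> multi_idx r r"
  shows "\<exists>f. good_map r \<alpha> f"
proof -
  define S where "S = {m. m < r \<and> \<alpha> m \<noteq> 0}"
  define Z where "Z = {m. m < r \<and> \<alpha> m = 0}"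
  have split: "{..<r} = S \<union> Z" "S \<inter> Z = {}" "finite S" "finite Z"
    by (auto simp: S_def Z_def)
  have "(\<Sum>m\<in>S. \<alpha> m - 1) + card S = (\<Sum>m\<in>S. (\<alpha> m - 1) + 1)"
    unfolding sum.distrib by simp
  also have "\<dots> = (\<Sum>m\<in>S. \<alpha> m) + (\<Sum>m\<in>Z. \<alpha> m)"
    by (simp add: S_def Z_def)
  also have "\<dots> = r"
    using assms split by (simp add: multi_idx_def flip: sum.union_disjoint)
  also have "r = card S + card Z"
    using card_Un_disjoint[of S Z] split by (metis card_lessThan)
  finally have "(\<Sum>m\<in>S. \<alpha> m - 1) = card Z"
    by simp
  then obtain g where g: "g ` Z \<subseteq> S" "\<forall>m\<in>S. card {z\<in>Z. g z = m} = \<alpha> m - 1"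
    using exists_map_with_fibre_cards[OF split(4,3)] by blast
  define f where "f p = (if p \<in> Z then g p else p)" for p
  have f_in_S: "f p \<in> S" if "p < r" for p
    using g(1) that by (auto simp: f_def S_def Z_def)
  have "card {p. p < r \<and> f p = m} = \<alpha> m" if "m < r" for m
  proof (cases "m \<in> S")
    case True
    then have "{p. p < r \<and> f p = m} = insert m {z\<in>Z. g z = m}"
      by (auto simp: f_def S_def Z_def)
    then show ?thesis
      using True g(2) split by (simp add: S_def Z_def)
  next
    case False
    then have "{p. p < r \<and> f p = m} = {}"
      using f_in_S by blast
    then show ?thesis
      using False that by (simp add: S_def)
  qed
  \<comment> \<open>\<open>f\<close> is idempotent, so its only cycles are fixed points\<close>
  moreover have "f p = p" if "p < r" "1 \<le> i" "(f ^^ i) p = p" for p i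
  proof -
    have "f (f p) = f p"
      using f_in_S[OF that(1)] split(2) by (auto simp: f_def)
    then have "(f ^^ i) p = f p"
      using that(2) funpow_Suc_eq_if_idempotent[of f p "i - 1"] by simp
    then show ?thesis using that(3) by simp
  qed
  moreover have "\<forall>p<r. f p < r"
    using f_in_S by (auto simp: S_def)
  ultimately show ?thesis
    unfolding good_map_def by blast
qed

abbreviation xmono_var :: "nat \<Rightarrow> nat \<Rightarrow> xmono" where
  "xmono_var k n \<equiv> Poly_Mapping.single (k, n) 1"

(* the monomial x_{kn} x_{un} x_{wj} of the summand v_k x_{kn} x_{un} A_{uw} x_{wj} of phi *)
definition phi_mono :: "nat \<Rightarrow> nat \<times> nat \<times> nat \<times> nat \<Rightarrow> xmono" where
  "phi_mono j = (\<lambda>(n, u, w, k). xmono_var k n + (xmono_var u n + xmono_var w j))"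

lemma phi_eq_sum_single:
  "phi a d t Qm Km v j = (\<Sum>(n, u, w, k)\<in>{..<t} \<times> {..<d} \<times> {..<d} \<times> {..<d}.
      Poly_Mapping.single (phi_mono j (n, u, w, k)) (v k * attnA a Qm Km u w))"
proof -
  have nested: "(\<Sum>n<t. \<Sum>u<d. \<Sum>w<d. \<Sum>k<d. g n u w k)
      = (\<Sum>(n, u, w, k)\<in>{..<t} \<times> {..<d} \<times> {..<d} \<times> {..<d}. g n u w k)" for g :: "nat \<Rightarrow> nat \<Rightarrow> nat \<Rightarrow> nat \<Rightarrow> xpoly"
    by (simp add: sum.cartesian_product split_def)
  show ?thesis
    unfolding phi_def xvar_def xconst_def phi_mono_def
    by (simp add: mult_single sum_distrib_left sum_distrib_right mult.assoc flip: nested)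
qed

lemma lookup_phi:
  "Poly_Mapping.lookup (phi a d t Qm Km v j) M =
     (\<Sum>(n, u, w, k)\<in>{x \<in> {..<t} \<times> {..<d} \<times> {..<d} \<times> {..<d}. phi_mono j x = M}.
        v k * attnA a Qm Km u w)"
  unfolding phi_eq_sum_single
  by (simp add: lookup_sum lookup_single when_def sum.inter_filter split_def)

lemma phi_mono_eq_coeff_mono_iff:
  assumes "n \<noteq> j"
  shows "phi_mono j (n', u, w, k) = coeff_mono n j {#p, q#} b \<longleftrightarrow>
     n' = n \<and> w = b \<and> ((k = p \<and> u = q) \<or> (k = q \<and> u = p))" (is "?L \<longleftrightarrow> ?R")
proof
  assume ?L
  then have "xmono_var k n' + (xmono_var u n' + xmono_var w j) = xmono_var p n + (xmono_var q n + xmono_var b j)"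
    by (simp add: phi_mono_def coeff_mono_def add_ac)
  then have lookup_eq: "Poly_Mapping.lookup (xmono_var k n' + (xmono_var u n' + xmono_var w j)) z
      = Poly_Mapping.lookup (xmono_var p n + (xmono_var q n + xmono_var b j)) z" for z
    by simp
  have e: "(if (k, n') = z then Suc 0 else 0) + (if (u, n') = z then Suc 0 else 0)
        + (if (w, j) = z then Suc 0 else 0)
      = (if (p, n) = z then Suc 0 else 0) + (if (q, n) = z then Suc 0 else 0)
        + (if (b, j) = z then Suc 0 else 0)" for z
    using lookup_eq[of z] by (simp add: lookup_add lookup_single when_def add.assoc split del: if_split)
  have "n' = n" using e[of "(p, n)"] assms by (auto split: if_splits)
  moreover have "w = b" using e[of "(b, j)"] assms \<open>n' = n\<close> by (auto split: if_splits)
  ultimately show ?R using e[of "(p, n)"] e[of "(q, n)"] e[of "(k, n)"] assms by (auto split: if_splits)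
qed (auto simp: phi_mono_def coeff_mono_def add_ac)

lemma cnj_doubleton:
  assumes "n < t" "n \<noteq> j" "p < d" "q < d" "b < d"
  shows "cnj a d t Qm Km v n j {#p, q#} b =
    v p * attnA a Qm Km q b + (if p = q then 0 else v q * attnA a Qm Km p b)"
proof -
  have "{x \<in> {..<t} \<times> {..<d} \<times> {..<d} \<times> {..<d}. phi_mono j x = coeff_mono n j {#p, q#} b}
      = {(n, q, b, p), (n, p, b, q)}"
    using assms by (auto simp: phi_mono_eq_coeff_mono_iff)
  then show ?thesis
    unfolding cnj_def lookup_phi by auto
qed

lemma omega_mul_mu_doubleton:
  assumes "n < t" "n \<noteq> j" "p < d" "q < d" "b < d"
  shows "omega p q * mu a d t Qm Km v (n, j, {#p, q#}, b) =
    v p * attnA a Qm Km q b + (if p = q then 0 else v q * attnA a Qm Km p b)"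
  using cnj_doubleton[OF assms, of a Qm Km v]
  by (simp add: mu_def ynj_def omega_def permutations_of_multiset_doubleton)

definition diag_plus_graph_mat :: "nat \<Rightarrow> (nat \<Rightarrow> real) \<Rightarrow> (nat \<Rightarrow> real) \<Rightarrow> (nat \<Rightarrow> nat) \<Rightarrow> real mat" where
  "diag_plus_graph_mat r c e f =
     mat r r (\<lambda>(p, q). (if q = p then c p else 0) + (if q = f p \<and> f p \<noteq> p then e p else 0))"

lemma det_diag_plus_graph_mat:
  assumes "\<forall>p<r. \<forall>i\<ge>1. (f ^^ i) p = p \<longrightarrow> f p = p"
  shows "det (diag_plus_graph_mat r c e f) = (\<Prod>p<r. c p)"
  using assms unfolding diag_plus_graph_mat_def
  by (subst det_eq_prod_diag_if_supported_on_acyclic[of _ _ f]) (auto split: if_splits intro!: prod.cong)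

lemma M_mat_mu_eq_mult:
  assumes "n < t" "n \<noteq> j"
    and ks: "inj_on ks {..<r}" "\<forall>m<r. ks m < d" and ls: "\<forall>m<r. ls m < d"
    and f: "\<forall>p<r. f p < r"
  shows "M_mat r n j ks ls f (mu a d t Qm Km v) =
    diag_plus_graph_mat r (\<lambda>p. v (ks (f p))) (\<lambda>p. v (ks p)) f * A_sub a Qm Km r ks ls"
    (is "_ = ?B * _")
proof (rule eq_matI)
  fix p l assume "p < dim_row (?B * A_sub a Qm Km r ks ls)" "l < dim_col (?B * A_sub a Qm Km r ks ls)"
  then have p: "p < r" "f p < r" and l: "l < r"
    using f by (auto simp: diag_plus_graph_mat_def A_sub_def)
  have same: "ks (f p) = ks p \<longleftrightarrow> f p = p"
    using ks(1) p by (auto dest: inj_onD)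
  have "(?B * A_sub a Qm Km r ks ls) $$ (p, l) =
      (\<Sum>q<r. (if q = p then v (ks (f p)) * attnA a Qm Km (ks q) (ls l) else 0)
        + (if q = f p then (if f p \<noteq> p then v (ks p) * attnA a Qm Km (ks q) (ls l) else 0) else 0))"
    using p l by (auto simp: diag_plus_graph_mat_def A_sub_def scalar_prod_def atLeast0LessThan distrib_right intro!: sum.cong)
  also have "\<dots> = omega (ks (f p)) (ks p) * mu a d t Qm Km v (n, j, {#ks (f p), ks p#}, ls l)"
    using p l ks ls same by (simp add: sum.distrib omega_mul_mu_doubleton[OF assms(1,2)])
  finally show "M_mat r n j ks ls f (mu a d t Qm Km v) $$ (p, l) = (?B * A_sub a Qm Km r ks ls) $$ (p, l)"
    using p l by (simp add: M_mat_def)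
qed (auto simp: M_mat_def diag_plus_graph_mat_def A_sub_def)

lemma prod_comp_eq_prod_power_fibre_card:
  assumes "\<forall>p<r. f p < (r::nat)"
  shows "(\<Prod>p<r. g (f p)) = (\<Prod>m<r. g m ^ card {p. p < r \<and> f p = m})"
proof -
  have "(\<Prod>p<r. g (f p)) = (\<Prod>m<r. \<Prod>p\<in>{p \<in> {..<r}. f p = m}. g (f p))"
    by (rule prod.group[symmetric]) (use assms in auto)
  also have "\<dots> = (\<Prod>m<r. g m ^ card {p. p < r \<and> f p = m})"
    by (rule prod.cong) auto
  finally show ?thesis .
qed

lemma D_fun_mu_eq:
  assumes "n < t" "n \<noteq> j"
    and "inj_on ks {..<r}" "\<forall>m<r. ks m < d" "\<forall>m<r. ls m < d"
    and f: "good_map r \<alpha> f"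
  shows "D_fun r n j ks ls f (mu a d t Qm Km v) = (\<Prod>m<r. v (ks m) ^ \<alpha> m) * det (A_sub a Qm Km r ks ls)"
proof -
  have f_in: "\<forall>p<r. f p < r" and fibres: "\<forall>m<r. card {p. p < r \<and> f p = m} = \<alpha> m"
    and acyclic: "\<forall>p<r. \<forall>i\<ge>1. (f ^^ i) p = p \<longrightarrow> f p = p"
    using f unfolding good_map_def by auto
  let ?B = "diag_plus_graph_mat r (\<lambda>p. v (ks (f p))) (\<lambda>p. v (ks p)) f"
  have "D_fun r n j ks ls f (mu a d t Qm Km v) = det ?B * det (A_sub a Qm Km r ks ls)"
    unfolding D_fun_def M_mat_mu_eq_mult[OF assms(1-5) f_in]
    by (rule det_mult) (auto simp: diag_plus_graph_mat_def A_sub_def)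
  also have "det ?B = (\<Prod>p<r. v (ks (f p)))"
    using acyclic by (rule det_diag_plus_graph_mat)
  also have "\<dots> = (\<Prod>m<r. v (ks m) ^ \<alpha> m)"
    using prod_comp_eq_prod_power_fibre_card[OF f_in, of "\<lambda>m. v (ks m)"] fibres by simp
  finally show ?thesis .
qed

lemma homogeneous_polyfun_D_fun: "homogeneous_polyfun r (D_fun r n j ks ls f)"
proof -
  have "homogeneous_polyfun r (\<lambda>y. det (M_mat r n j ks ls f y))"
  proof (rule homogeneous_polyfun_det)
    fix p q assume "p < r" "q < r"
    then show "homogeneous_polyfun 1 (\<lambda>y. M_mat r n j ks ls f y $$ (p, q))"
      using homogeneous_polyfun_mult[OF homogeneous_polyfun_const homogeneous_polyfun_coord]
      by (simp add: M_mat_def)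
  qed (simp add: M_mat_def)
  then show ?thesis
    by (simp add: D_fun_def[abs_def])
qed

lemma D_fun_minor_vanishes_on_attention_variety:
  assumes "n < t" "n \<noteq> j"
    and "inj_on ks {..<r}" "\<forall>m<r. ks m < d" "\<forall>m<r. ls m < d"
    and f: "good_map r \<alpha>\<^sub>1\<^sub>1 f\<^sub>1\<^sub>1" "good_map r \<alpha>\<^sub>2\<^sub>2 f\<^sub>2\<^sub>2" "good_map r \<alpha>\<^sub>1\<^sub>2 f\<^sub>1\<^sub>2" "good_map r \<alpha>\<^sub>2\<^sub>1 f\<^sub>2\<^sub>1"
    and exponents: "\<And>m. \<alpha>\<^sub>1\<^sub>1 m + \<alpha>\<^sub>2\<^sub>2 m = \<alpha>\<^sub>1\<^sub>2 m + \<alpha>\<^sub>2\<^sub>1 m"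
  defines "minor y \<equiv> D_fun r n j ks ls f\<^sub>1\<^sub>1 y * D_fun r n j ks ls f\<^sub>2\<^sub>2 y
                    - D_fun r n j ks ls f\<^sub>1\<^sub>2 y * D_fun r n j ks ls f\<^sub>2\<^sub>1 y"
  shows "\<exists>P. homogeneous_of_degree P (2 * r) \<and> (\<forall>y. peval P y = minor y)
           \<and> (\<forall>y\<in>attention_variety a d t. peval P y = 0)"
proof -
  have "homogeneous_polyfun (r + r) minor"
    unfolding minor_def
    by (intro homogeneous_polyfun_diff homogeneous_polyfun_mult homogeneous_polyfun_D_fun)
  then obtain P where P: "homogeneous_of_degree P (2 * r)" "\<forall>y. peval P y = minor y"
    unfolding homogeneous_polyfun_def mult_2 by blast
  have "peval P (mu a d t Qm Km v) = 0" for Qm Km v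
  proof -
    let ?x = "\<lambda>m. v (ks m)" and ?det = "det (A_sub a Qm Km r ks ls)"
    have "peval P (mu a d t Qm Km v) =
        (\<Prod>m<r. ?x m ^ (\<alpha>\<^sub>1\<^sub>1 m + \<alpha>\<^sub>2\<^sub>2 m)) * ?det\<^sup>2 - (\<Prod>m<r. ?x m ^ (\<alpha>\<^sub>1\<^sub>2 m + \<alpha>\<^sub>2\<^sub>1 m)) * ?det\<^sup>2"
      using P(2) D_fun_mu_eq[OF assms(1-5) f(1)] D_fun_mu_eq[OF assms(1-5) f(2)]
        D_fun_mu_eq[OF assms(1-5) f(3)] D_fun_mu_eq[OF assms(1-5) f(4)]
      by (simp add: minor_def power_add prod.distrib power2_eq_square mult_ac)
    then show ?thesis
      by (simp add: exponents)
  qed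
  then show ?thesis
    using P unfolding attention_variety_def by blast
qed

lemma multi_idx_add:
  "\<beta> \<in> multi_idx r k \<Longrightarrow> \<gamma> \<in> multi_idx r l \<Longrightarrow> (\<lambda>m. \<beta> m + \<gamma> m) \<in> multi_idx r (k + l)"
  by (simp add: multi_idx_def sum.distrib)

theorem mainTheorem12:
  fixes a d t n j r :: nat and ks ls :: "nat \<Rightarrow> nat"
  assumes "t > 1" and "j < t" and "n < t" and "n \<noteq> j"
    and "2 \<le> r" and "r \<le> min a d"
    and "inj_on ks {..<r}" and "\<forall>m<r. ks m < d"
    and "inj_on ls {..<r}" and "\<forall>m<r. ls m < d"
  shows
    "(\<forall>\<alpha>\<in>multi_idx r r. \<exists>f. good_map r \<alpha> f)
     \<and> (\<forall>\<alpha>\<in>multi_idx r r. \<forall>f. good_map r \<alpha> f \<longrightarrow>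
          (\<forall>Qm Km v. D_fun r n j ks ls f (mu a d t Qm Km v)
             = (\<Prod>m<r. v (ks m) ^ \<alpha> m) * det (A_sub a Qm Km r ks ls)))
     \<and> (\<forall>F. (\<forall>\<alpha>\<in>multi_idx r r. good_map r \<alpha> (F \<alpha>)) \<longrightarrow>
          (\<forall>k. 1 \<le> k \<and> k < r \<longrightarrow>
            (\<forall>\<beta>1\<in>multi_idx r k. \<forall>\<beta>2\<in>multi_idx r k.
             \<forall>\<gamma>1\<in>multi_idx r (r - k). \<forall>\<gamma>2\<in>multi_idx r (r - k).
               \<exists>P. homogeneous_of_degree P (2 * r)
                 \<and> (\<forall>y. peval P y =
                       D_fun r n j ks ls (F (\<lambda>m. \<beta>1 m + \<gamma>1 m)) y * D_fun r n j ks ls (F (\<lambda>m. \<beta>2 m + \<gamma>2 m)) y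
                     - D_fun r n j ks ls (F (\<lambda>m. \<beta>1 m + \<gamma>2 m)) y * D_fun r n j ks ls (F (\<lambda>m. \<beta>2 m + \<gamma>1 m)) y)
                 \<and> (\<forall>y\<in>attention_variety a d t. peval P y = 0))))"
proof -
  have minors: "\<exists>P. homogeneous_of_degree P (2 * r)
      \<and> (\<forall>y. peval P y =
            D_fun r n j ks ls (F (\<lambda>m. \<beta>1 m + \<gamma>1 m)) y * D_fun r n j ks ls (F (\<lambda>m. \<beta>2 m + \<gamma>2 m)) y
          - D_fun r n j ks ls (F (\<lambda>m. \<beta>1 m + \<gamma>2 m)) y * D_fun r n j ks ls (F (\<lambda>m. \<beta>2 m + \<gamma>1 m)) y)
      \<and> (\<forall>y\<in>attention_variety a d t. peval P y = 0)"
    if F: "\<forall>\<alpha>\<in>multi_idx r r. good_map r \<alpha> (F \<alpha>)" and "k < r"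
      and \<beta>: "\<beta>1 \<in> multi_idx r k" "\<beta>2 \<in> multi_idx r k"
      and \<gamma>: "\<gamma>1 \<in> multi_idx r (r - k)" "\<gamma>2 \<in> multi_idx r (r - k)"
    for F k \<beta>1 \<beta>2 \<gamma>1 \<gamma>2
  proof -
    have good: "good_map r (\<lambda>m. \<beta> m + \<gamma> m) (F (\<lambda>m. \<beta> m + \<gamma> m))"
      if "\<beta> \<in> multi_idx r k" "\<gamma> \<in> multi_idx r (r - k)" for \<beta> \<gamma>
      using F multi_idx_add[OF that] \<open>k < r\<close> by simp
    show ?thesis
      by (rule D_fun_minor_vanishes_on_attention_variety[OF assms(3,4,7,8,10)
            good[OF \<beta>(1) \<gamma>(1)] good[OF \<beta>(2) \<gamma>(2)] good[OF \<beta>(1) \<gamma>(2)] good[OF \<beta>(2) \<gamma>(1)]])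
        (simp add: add_ac)
  qed
  show ?thesis
    using good_map_exists D_fun_mu_eq[OF assms(3,4,7,8,10)] minors by blast
qed

end
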